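(* The graph $G_6$ on vertices $\{1,\dots,6\}$ with adjacency matrix $$A_{G_6}=\begin{pmatrix}0&0&0&0&1&1\\0&0&1&1&0&1\\0&1&0&1&0&1\\0&1&1&0&1&1\\1&0&0&1&0&0\\1&1&1&1&0&0\end{pmatrix}$$ does not possess quantum twin vertices.
   Context: A classical graph $G$ is regarded as a quantum graph with $C(G)=C(V)$ (functions on the vertex set), the uniform state $\psi(f)=\frac1{|V|}\sum_v f(v)$, and adjacency operator given by $A_G$. An action of a compact quantum group $\mathbb{H}$ on $G$ is a $\psi$-preserving action $\rho\colon C(V)\to C(V)\otimes C(\mathbb{H})$ with $\rho\circ A_G=(A_G\otimes\mathrm{id})\circ\rho$ (equivalently given by a magic unitary with entries in $C(\mathbb{H})$ commuting with $A_G$). $G$ has $\mathbb{H}$-twins if there are two different actions $\rho_1\neq\rho_2$ of $\mathbb{H}$ on $G$ with $\rho_1\circ A_G=\rho_2\circ A_G$; $G$ has quantum twin vertices if it has $\mathbb{H}$-twins for some compact quantum group $\mathbb{H}$. *)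

theory Defs
  imports Complex_Main
begin

text \<open>
  A compact quantum group H is encoded by its CQG algebra O(H) (the dense Hopf
  *-subalgebra of matrix coefficients), carried by a type 'a of class ring_1
  together with: a complex scalar multiplication sc, an involution st,
  a comultiplication Delta (a finite sum of elementary tensors, i.e. a list of pairs),
  counit eps, antipode S and a positive faithful Haar state h.
  Elements of the algebraic tensor product O(H) x O(H) are represented by lists of
  pairs; two such representatives are equal as tensors iff they agree under all
  products f x g of linear functionals, so every tensor identity is phrased via
  the pairing below.
\<close>

definition lin_fun :: "(complex \<Rightarrow> 'a::ring_1 \<Rightarrow> 'a) \<Rightarrow> ('a \<Rightarrow> complex) \<Rightarrow> bool" where
  "lin_fun sc f \<longleftrightarrow> (\<forall>x y. f (x + y) = f x + f y) \<and> (\<forall>c x. f (sc c x) = c * f x)"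

definition tpair :: "('a \<Rightarrow> complex) \<Rightarrow> ('a \<Rightarrow> complex) \<Rightarrow> ('a \<times> 'a) list \<Rightarrow> complex" where
  "tpair f g T = (\<Sum>p\<leftarrow>T. f (fst p) * g (snd p))"

definition star_algebra :: "(complex \<Rightarrow> 'a::ring_1 \<Rightarrow> 'a) \<Rightarrow> ('a \<Rightarrow> 'a) \<Rightarrow> bool" where
  "star_algebra sc st \<longleftrightarrow>
     (\<forall>c x y. sc c (x + y) = sc c x + sc c y) \<and>
     (\<forall>c d x. sc (c + d) x = sc c x + sc d x) \<and>
     (\<forall>c d x. sc (c * d) x = sc c (sc d x)) \<and>
     (\<forall>x. sc 1 x = x) \<and>
     (\<forall>c x y. sc c (x * y) = sc c x * y \<and> sc c (x * y) = x * sc c y) \<and>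
     (\<forall>x y. st (x + y) = st x + st y) \<and>
     (\<forall>c x. st (sc c x) = sc (cnj c) (st x)) \<and>
     (\<forall>x y. st (x * y) = st y * st x) \<and>
     (\<forall>x. st (st x) = x)"

definition hopf_star_algebra ::
  "(complex \<Rightarrow> 'a::ring_1 \<Rightarrow> 'a) \<Rightarrow> ('a \<Rightarrow> 'a) \<Rightarrow> ('a \<Rightarrow> ('a \<times> 'a) list)
     \<Rightarrow> ('a \<Rightarrow> complex) \<Rightarrow> ('a \<Rightarrow> 'a) \<Rightarrow> bool" where
  "hopf_star_algebra sc st Delta eps S \<longleftrightarrow>
     star_algebra sc st \<and>
     (\<forall>f g. lin_fun sc f \<longrightarrow> lin_fun sc g \<longrightarrow>
        (\<forall>a b. tpair f g (Delta (a + b)) = tpair f g (Delta a) + tpair f g (Delta b)) \<and>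
        (\<forall>c a. tpair f g (Delta (sc c a)) = c * tpair f g (Delta a)) \<and>
        (\<forall>a b. tpair f g (Delta (a * b)) =
              (\<Sum>p\<leftarrow>Delta a. \<Sum>q\<leftarrow>Delta b. f (fst p * fst q) * g (snd p * snd q))) \<and>
        tpair f g (Delta 1) = f 1 * g 1 \<and>
        (\<forall>a. tpair f g (Delta (st a)) =
              (\<Sum>p\<leftarrow>Delta a. f (st (fst p)) * g (st (snd p)))) \<and>
        (\<forall>k. lin_fun sc k \<longrightarrow> (\<forall>a.
            (\<Sum>p\<leftarrow>Delta a. tpair f g (Delta (fst p)) * k (snd p)) =
            (\<Sum>p\<leftarrow>Delta a. f (fst p) * tpair g k (Delta (snd p)))))) \<and>
     lin_fun sc eps \<and> eps 1 = 1 \<and> (\<forall>a b. eps (a * b) = eps a * eps b) \<and>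
     (\<forall>a. (\<Sum>p\<leftarrow>Delta a. sc (eps (fst p)) (snd p)) = a) \<and>
     (\<forall>a. (\<Sum>p\<leftarrow>Delta a. sc (eps (snd p)) (fst p)) = a) \<and>
     (\<forall>x y. S (x + y) = S x + S y) \<and> (\<forall>c x. S (sc c x) = sc c (S x)) \<and>
     (\<forall>a. (\<Sum>p\<leftarrow>Delta a. S (fst p) * snd p) = sc (eps a) 1) \<and>
     (\<forall>a. (\<Sum>p\<leftarrow>Delta a. fst p * S (snd p)) = sc (eps a) 1)"

text \<open>CQG algebra = Hopf *-algebra with a positive faithful (two-sided invariant) Haar state
  (Dijkhuizen--Koornwinder); these are exactly the algebras O(H) of compact quantum groups H.\<close>
definition cqg_algebra ::
  "(complex \<Rightarrow> 'a::ring_1 \<Rightarrow> 'a) \<Rightarrow> ('a \<Rightarrow> 'a) \<Rightarrow> ('a \<Rightarrow> ('a \<times> 'a) list)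
     \<Rightarrow> ('a \<Rightarrow> complex) \<Rightarrow> ('a \<Rightarrow> 'a) \<Rightarrow> ('a \<Rightarrow> complex) \<Rightarrow> bool" where
  "cqg_algebra sc st Delta eps S h \<longleftrightarrow>
     hopf_star_algebra sc st Delta eps S \<and>
     lin_fun sc h \<and> h 1 = 1 \<and>
     (\<forall>a. (\<Sum>p\<leftarrow>Delta a. sc (h (fst p)) (snd p)) = sc (h a) 1) \<and>
     (\<forall>a. (\<Sum>p\<leftarrow>Delta a. sc (h (snd p)) (fst p)) = sc (h a) 1) \<and>
     (\<forall>a. a \<noteq> 0 \<longrightarrow> Im (h (st a * a)) = 0 \<and> Re (h (st a * a)) > 0)"

definition magic_unitary :: "('a::ring_1 \<Rightarrow> 'a) \<Rightarrow> 'v set \<Rightarrow> ('v \<Rightarrow> 'v \<Rightarrow> 'a) \<Rightarrow> bool" where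
  "magic_unitary st V u \<longleftrightarrow>
     (\<forall>i\<in>V. \<forall>j\<in>V. st (u i j) = u i j \<and> u i j * u i j = u i j) \<and>
     (\<forall>i\<in>V. (\<Sum>j\<in>V. u i j) = 1) \<and>
     (\<forall>j\<in>V. (\<Sum>i\<in>V. u i j) = 1)"

definition mat_times_adj :: "'v set \<Rightarrow> ('v \<Rightarrow> 'v \<Rightarrow> 'a::ring_1) \<Rightarrow> ('v \<Rightarrow> 'v \<Rightarrow> nat) \<Rightarrow> 'v \<Rightarrow> 'v \<Rightarrow> 'a" where
  "mat_times_adj V u A i j = (\<Sum>k\<in>V. u i k * of_nat (A k j))"

definition adj_times_mat :: "'v set \<Rightarrow> ('v \<Rightarrow> 'v \<Rightarrow> nat) \<Rightarrow> ('v \<Rightarrow> 'v \<Rightarrow> 'a::ring_1) \<Rightarrow> 'v \<Rightarrow> 'v \<Rightarrow> 'a" where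
  "adj_times_mat V A u i j = (\<Sum>k\<in>V. of_nat (A i k) * u k j)"

text \<open>It corresponds to the coaction rho(e_j) = sum_i e_i (x) u_ij.\<close>
definition graph_action ::
  "(complex \<Rightarrow> 'a::ring_1 \<Rightarrow> 'a) \<Rightarrow> ('a \<Rightarrow> 'a) \<Rightarrow> ('a \<Rightarrow> ('a \<times> 'a) list)
     \<Rightarrow> 'v set \<Rightarrow> ('v \<Rightarrow> 'v \<Rightarrow> nat) \<Rightarrow> ('v \<Rightarrow> 'v \<Rightarrow> 'a) \<Rightarrow> bool" where
  "graph_action sc st Delta V A u \<longleftrightarrow>
     magic_unitary st V u \<and>
     (\<forall>i\<in>V. \<forall>j\<in>V. \<forall>f g. lin_fun sc f \<longrightarrow> lin_fun sc g \<longrightarrow>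
        tpair f g (Delta (u i j)) = (\<Sum>k\<in>V. f (u i k) * g (u k j))) \<and>
     (\<forall>i\<in>V. \<forall>j\<in>V. mat_times_adj V u A i j = adj_times_mat V A u i j)"

text \<open>H-twins: two different actions rho_1 \<noteq> rho_2 with rho_1 o A = rho_2 o A,
  i.e. u_1 \<noteq> u_2 and u_1 A = u_2 A.\<close>
definition has_H_twins ::
  "(complex \<Rightarrow> 'a::ring_1 \<Rightarrow> 'a) \<Rightarrow> ('a \<Rightarrow> 'a) \<Rightarrow> ('a \<Rightarrow> ('a \<times> 'a) list)
     \<Rightarrow> 'v set \<Rightarrow> ('v \<Rightarrow> 'v \<Rightarrow> nat) \<Rightarrow> bool" where
  "has_H_twins sc st Delta V A \<longleftrightarrow>
     (\<exists>u1 u2. graph_action sc st Delta V A u1 \<and> graph_action sc st Delta V A u2 \<and>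
        (\<exists>i\<in>V. \<exists>j\<in>V. u1 i j \<noteq> u2 i j) \<and>
        (\<forall>i\<in>V. \<forall>j\<in>V. mat_times_adj V u1 A i j = mat_times_adj V u2 A i j))"

definition G6_V :: "nat set" where "G6_V = {1..6}"

definition G6_A :: "nat \<Rightarrow> nat \<Rightarrow> nat" where
  "G6_A i j = [[0,0,0,0,1,1],
               [0,0,1,1,0,1],
               [0,1,0,1,0,1],
               [0,1,1,0,1,1],
               [1,0,0,1,0,0],
               [1,1,1,1,0,0]] ! (i - 1) ! (j - 1)"

end

theory Submission imports Defs begin

text \<open>
  Summing the relation \<open>uA = Au\<close> of an action along row \<open>i\<close> gives
  \<open>\<Sum>\<^sub>k u i k * deg k = deg i\<close>. If \<open>i\<close> has minimal degree, the faithful Haar state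
  applied to \<open>\<Sum>\<^sub>k u i k * (deg k - deg i) = 0\<close>, a nonnegative combination of
  projections, forces \<open>u i k = 0\<close> whenever \<open>deg k \<noteq> deg i\<close>; in \<open>G6\<close> this gives
  \<open>u 1 4 = 0\<close> for every action. The difference \<open>w = u1 - u2\<close> of twin actions satisfies
  \<open>wA = 0\<close> and \<open>Aw = 0\<close>; as the kernel of \<open>A\<close> is spanned by \<open>x = (1,0,0,-1,-1,1)\<close>,
  \<open>w = w 1 1 * x x\<^sup>T\<close>, so \<open>w 1 1 = - w 1 4 = 0\<close> and \<open>w = 0\<close>.
\<close>

lemma lin_fun_zero:
  assumes "lin_fun sc f" shows "f 0 = 0"
proof -
  have "f (0 + 0) = f 0 + f 0" using assms unfolding lin_fun_def by blast
  then show ?thesis by simp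
qed

lemma lin_fun_sum:
  assumes "lin_fun sc f" shows "f (\<Sum>k\<in>K. g k) = (\<Sum>k\<in>K. f (g k))"
proof (induction K rule: infinite_finite_induct)
  case (insert k K)
  then show ?case using assms by (simp add: lin_fun_def)
qed (simp_all add: lin_fun_zero[OF assms])

lemma lin_fun_mult_of_nat:
  assumes "lin_fun sc f" shows "f (x * of_nat n) = of_nat n * f x"
proof (induction n)
  case (Suc n)
  have "f (x * of_nat (Suc n)) = f (x * of_nat n) + f x"
    using assms by (simp add: lin_fun_def distrib_left)
  then show ?case using Suc by (simp add: distrib_right)
qed (simp add: lin_fun_zero[OF assms])

lemma star_algebra_double_eq_zero:
  fixes sc :: "complex \<Rightarrow> 'a::ring_1 \<Rightarrow> 'a" and x :: 'a
  assumes "star_algebra sc st" and "x + x = 0"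
  shows "x = 0"
proof -
  have add: "sc c (y + z) = sc c y + sc c z" and add_scalar: "sc (c + d) y = sc c y + sc d y"
    and one: "sc 1 y = y" for c d y z
    using assms(1) unfolding star_algebra_def by blast+
  have "x = sc (1/2 + 1/2) x" by (simp add: one)
  also have "\<dots> = sc (1/2) (x + x)" by (simp only: add_scalar add)
  also have "\<dots> = sc (1/2) 0 + sc (1/2) 0" using assms(2) add[of _ 0 0] by simp
  finally have "x = sc (1/2) 0 + sc (1/2) 0" .
  moreover have "sc (1/2) 0 = 0" using add[of "1/2" 0 0] by simp
  ultimately show ?thesis by simp
qed

lemma cqg_haar_projection_nonneg:
  assumes "cqg_algebra sc st Delta eps S h" and "st p = p" and "p * p = p"
  shows "Re (h p) \<ge> 0"
  using assms lin_fun_zero[of sc h] unfolding cqg_algebra_def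
  by (metis dual_order.refl less_imp_le zero_complex.sel(1))

lemma cqg_haar_projection_eq_zero:
  assumes "cqg_algebra sc st Delta eps S h" and "st p = p" and "p * p = p"
    and "Re (h p) = 0"
  shows "p = 0"
  using assms unfolding cqg_algebra_def by (metis less_irrefl)

definition degree :: "'v set \<Rightarrow> ('v \<Rightarrow> 'v \<Rightarrow> nat) \<Rightarrow> 'v \<Rightarrow> nat" where
  "degree V A i = (\<Sum>j\<in>V. A i j)"

lemma graph_action_degree_sum:
  assumes "graph_action sc st Delta V A u" and "i \<in> V"
  shows "(\<Sum>k\<in>V. u i k * of_nat (degree V A k)) = of_nat (degree V A i)"
proof -
  have comm: "mat_times_adj V u A i j = adj_times_mat V A u i j" if "j \<in> V" for j
    using assms that unfolding graph_action_def by blast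
  have row: "(\<Sum>j\<in>V. u k j) = 1" if "k \<in> V" for k
    using assms(1) that unfolding graph_action_def magic_unitary_def by blast
  have "(\<Sum>k\<in>V. u i k * of_nat (degree V A k)) = (\<Sum>k\<in>V. \<Sum>j\<in>V. u i k * of_nat (A k j))"
    by (simp add: degree_def sum_distrib_left)
  also have "\<dots> = (\<Sum>j\<in>V. mat_times_adj V u A i j)"
    unfolding mat_times_adj_def by (rule sum.swap)
  also have "\<dots> = (\<Sum>j\<in>V. adj_times_mat V A u i j)" using comm by simp
  also have "\<dots> = (\<Sum>k\<in>V. \<Sum>j\<in>V. of_nat (A i k) * u k j)"
    unfolding adj_times_mat_def by (rule sum.swap)
  also have "\<dots> = (\<Sum>k\<in>V. of_nat (A i k) * (\<Sum>j\<in>V. u k j))"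
    by (simp add: sum_distrib_left)
  also have "\<dots> = of_nat (degree V A i)" by (simp add: row degree_def)
  finally show ?thesis .
qed

lemma graph_action_eq_zero_if_degree_differs:
  assumes cqg: "cqg_algebra sc st Delta eps S h" and act: "graph_action sc st Delta V A u"
    and "finite V" and "i \<in> V" and min: "\<And>k. k \<in> V \<Longrightarrow> degree V A i \<le> degree V A k"
    and "k \<in> V" and "degree V A k \<noteq> degree V A i"
  shows "u i k = 0"
proof -
  define d where "d k = degree V A k - degree V A i" for k
  have "magic_unitary st V u" using act unfolding graph_action_def by blast
  then have row: "(\<Sum>k\<in>V. u i k) = 1"
    and proj: "\<And>k. k \<in> V \<Longrightarrow> st (u i k) = u i k \<and> u i k * u i k = u i k"
    using \<open>i \<in> V\<close> unfolding magic_unitary_def by blast+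
  have "u i k * of_nat (degree V A k) = u i k * of_nat (degree V A i) + u i k * of_nat (d k)"
    if "k \<in> V" for k
  proof -
    have "degree V A k = degree V A i + d k" using min[OF that] by (simp add: d_def)
    then show ?thesis by (simp only: of_nat_add distrib_left)
  qed
  then have "(\<Sum>k\<in>V. u i k * of_nat (degree V A k))
      = (\<Sum>k\<in>V. u i k) * of_nat (degree V A i) + (\<Sum>k\<in>V. u i k * of_nat (d k))"
    by (simp add: sum.distrib sum_distrib_right)
  then have weighted: "(\<Sum>k\<in>V. u i k * of_nat (d k)) = 0"
    using graph_action_degree_sum[OF act \<open>i \<in> V\<close>] row by simp
  have haar: "lin_fun sc h" using cqg unfolding cqg_algebra_def by blast
  have "(\<Sum>k\<in>V. of_nat (d k) * h (u i k)) = h (\<Sum>k\<in>V. u i k * of_nat (d k))"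
    by (simp add: lin_fun_sum[OF haar] lin_fun_mult_of_nat[OF haar])
  then have haar_sum: "(\<Sum>k\<in>V. of_nat (d k) * h (u i k)) = 0"
    by (simp add: weighted lin_fun_zero[OF haar])
  have "(\<Sum>k\<in>V. of_nat (d k) * Re (h (u i k))) = 0"
    using arg_cong[OF haar_sum, of Re] by simp
  moreover have "of_nat (d k) * Re (h (u i k)) \<ge> 0" if "k \<in> V" for k
    using cqg_haar_projection_nonneg[OF cqg] proj[OF that] by simp
  ultimately have "of_nat (d k) * Re (h (u i k)) = 0"
    using sum_nonneg_eq_0_iff[OF \<open>finite V\<close>, of "\<lambda>k. of_nat (d k) * Re (h (u i k))"]
      \<open>k \<in> V\<close> by blast
  moreover have "d k > 0" using assms(7) min[OF \<open>k \<in> V\<close>] by (simp add: d_def)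
  ultimately show ?thesis
    using cqg_haar_projection_eq_zero[OF cqg] proj[OF \<open>k \<in> V\<close>] by simp
qed

lemma G6_V_eq: "G6_V = {1, 2, 3, 4, 5, 6}"
  by (auto simp: G6_V_def)

lemma sum_G6_V: "(\<Sum>k\<in>G6_V. f k) = f 1 + f 2 + f 3 + f 4 + f 5 + f 6"
  by (simp add: G6_V_eq add.assoc)

lemma G6_A_sym: "i \<in> G6_V \<Longrightarrow> j \<in> G6_V \<Longrightarrow> G6_A i j = G6_A j i"
  by (auto simp: G6_V_eq G6_A_def)

lemma G6_degree:
  "degree G6_V G6_A 1 = 2" "degree G6_V G6_A 2 = 3" "degree G6_V G6_A 3 = 3"
  "degree G6_V G6_A 4 = 4" "degree G6_V G6_A 5 = 2" "degree G6_V G6_A 6 = 4"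
  by (simp_all add: degree_def sum_G6_V G6_A_def)

lemma G6_degree_ge: "k \<in> G6_V \<Longrightarrow> 2 \<le> degree G6_V G6_A k"
  by (auto simp: G6_V_eq degree_def G6_A_def)

definition G6_kernel_vector :: "nat \<Rightarrow> int" where
  "G6_kernel_vector k = [1, 0, 0, -1, -1, 1] ! (k - 1)"

lemma G6_left_kernel:
  fixes a :: "nat \<Rightarrow> 'a::ring_1"
  assumes half: "\<And>x::'a. x + x = 0 \<Longrightarrow> x = 0"
    and ker: "\<And>j. j \<in> G6_V \<Longrightarrow> (\<Sum>k\<in>G6_V. a k * of_nat (G6_A k j)) = 0"
    and "k \<in> G6_V"
  shows "a k = of_int (G6_kernel_vector k) * a 1"
proof -
  have col: "(\<Sum>k\<in>G6_V. a k * of_nat (G6_A k j)) = 0" if "j \<in> {1, 2, 3, 5, 6}" for j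
    using ker that by (auto simp: G6_V_eq)
  have e1: "a 5 + a 6 = 0" and e2: "a 3 + a 4 + a 6 = 0" and e3: "a 2 + a 4 + a 6 = 0"
    and e5: "a 1 + a 4 = 0" and e6: "a 1 + a 2 + a 3 + a 4 = 0"
    using col[of 1] col[of 2] col[of 3] col[of 5] col[of 6]
    by (simp_all add: sum_G6_V G6_A_def)
  have "a 3 - a 2 = (a 3 + a 4 + a 6) - (a 2 + a 4 + a 6)" by (simp add: algebra_simps)
  then have a3: "a 3 = a 2" using e2 e3 by simp
  have "a 2 + a 2 = (a 1 + a 2 + a 3 + a 4) - (a 1 + a 4)" unfolding a3 by (simp add: algebra_simps)
  also have "\<dots> = 0" by (simp only: e5 e6 diff_self)
  finally have a2: "a 2 = 0" by (rule half)
  have a4: "a 4 = - a 1" using e5 by (simp add: eq_neg_iff_add_eq_0 add.commute)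
  have a6: "a 6 = a 1" using e3 a2 a4 by (simp add: algebra_simps)
  have a5: "a 5 = - a 1" using e1 a6 by (simp add: eq_neg_iff_add_eq_0)
  show ?thesis
    using \<open>k \<in> G6_V\<close> a2 a3 a4 a5 a6 by (auto simp: G6_V_eq G6_kernel_vector_def)
qed

lemma G6_action_entry_1_4:
  assumes "cqg_algebra sc st Delta eps S h" and "graph_action sc st Delta G6_V G6_A u"
  shows "u 1 4 = 0"
proof -
  have min: "degree G6_V G6_A 1 \<le> degree G6_V G6_A k" if "k \<in> G6_V" for k
    using G6_degree_ge[OF that] by (simp only: G6_degree(1))
  have "degree G6_V G6_A 4 \<noteq> degree G6_V G6_A 1"
    by (simp only: G6_degree)
  then show ?thesis
    using graph_action_eq_zero_if_degree_differs[OF assms _ _ min] by (simp add: G6_V_def)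
qed

lemma mat_times_adj_diff:
  "mat_times_adj V (\<lambda>i j. u i j - v i j) A i j = mat_times_adj V u A i j - mat_times_adj V v A i j"
  by (simp add: mat_times_adj_def left_diff_distrib sum_subtractf)

lemma adj_times_mat_diff:
  "adj_times_mat V A (\<lambda>i j. u i j - v i j) i j = adj_times_mat V A u i j - adj_times_mat V A v i j"
  by (simp add: adj_times_mat_def right_diff_distrib sum_subtractf)

lemma G6_two_sided_kernel:
  fixes w :: "nat \<Rightarrow> nat \<Rightarrow> 'a::ring_1"
  assumes half: "\<And>x::'a. x + x = 0 \<Longrightarrow> x = 0"
    and right: "\<And>i j. i \<in> G6_V \<Longrightarrow> j \<in> G6_V \<Longrightarrow> mat_times_adj G6_V w G6_A i j = 0"
    and left: "\<And>i j. i \<in> G6_V \<Longrightarrow> j \<in> G6_V \<Longrightarrow> adj_times_mat G6_V G6_A w i j = 0"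
    and i: "i \<in> G6_V" and j: "j \<in> G6_V"
  shows "w i j = of_int (G6_kernel_vector i * G6_kernel_vector j) * w 1 1"
proof -
  have row1: "w 1 j = of_int (G6_kernel_vector j) * w 1 1"
  proof (rule G6_left_kernel[OF half _ j])
    fix j' assume "j' \<in> G6_V"
    then show "(\<Sum>k\<in>G6_V. w 1 k * of_nat (G6_A k j')) = 0"
      using right[of 1 j'] by (simp add: mat_times_adj_def G6_V_def)
  qed
  have col: "w i j = of_int (G6_kernel_vector i) * w 1 j"
  proof (rule G6_left_kernel[where a = "\<lambda>k. w k j", OF half _ i])
    fix j' assume j': "j' \<in> G6_V"
    have "(\<Sum>k\<in>G6_V. w k j * of_nat (G6_A k j')) = adj_times_mat G6_V G6_A w j' j"
      unfolding adj_times_mat_def using G6_A_sym[OF _ j'] by (simp add: mult_of_nat_commute)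
    then show "(\<Sum>k\<in>G6_V. w k j * of_nat (G6_A k j')) = 0"
      using left[OF j' j] by simp
  qed
  show ?thesis using row1 col by (simp add: mult.assoc)
qed

theorem mainTheorem8:
  fixes sc :: "complex \<Rightarrow> 'a::ring_1 \<Rightarrow> 'a" and st :: "'a \<Rightarrow> 'a"
    and Delta :: "'a \<Rightarrow> ('a \<times> 'a) list" and eps :: "'a \<Rightarrow> complex"
    and S :: "'a \<Rightarrow> 'a" and h :: "'a \<Rightarrow> complex"
  assumes "cqg_algebra sc st Delta eps S h"
  shows "\<not> has_H_twins sc st Delta G6_V G6_A"
proof
  assume "has_H_twins sc st Delta G6_V G6_A"
  then obtain u1 u2 where act: "graph_action sc st Delta G6_V G6_A u1"
      "graph_action sc st Delta G6_V G6_A u2"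
    and differ: "\<exists>i\<in>G6_V. \<exists>j\<in>G6_V. u1 i j \<noteq> u2 i j"
    and same: "\<forall>i\<in>G6_V. \<forall>j\<in>G6_V. mat_times_adj G6_V u1 G6_A i j = mat_times_adj G6_V u2 G6_A i j"
    unfolding has_H_twins_def by blast
  have "star_algebra sc st" using assms unfolding cqg_algebra_def hopf_star_algebra_def by blast
  note half = star_algebra_double_eq_zero[OF this]
  define w where "w = (\<lambda>i j. u1 i j - u2 i j)"
  have right: "mat_times_adj G6_V w G6_A i j = 0" if "i \<in> G6_V" "j \<in> G6_V" for i j
    using same that by (simp add: w_def mat_times_adj_diff)
  have left: "adj_times_mat G6_V G6_A w i j = 0" if "i \<in> G6_V" "j \<in> G6_V" for i j
    using same act that unfolding graph_action_def by (simp add: w_def adj_times_mat_diff)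
  have kernel: "w i j = of_int (G6_kernel_vector i * G6_kernel_vector j) * w 1 1"
    if "i \<in> G6_V" "j \<in> G6_V" for i j
    using half right left that by (rule G6_two_sided_kernel)
  have "w 1 4 = 0"
    using G6_action_entry_1_4[OF assms act(1)] G6_action_entry_1_4[OF assms act(2)]
    by (simp add: w_def)
  then have "w 1 1 = 0" using kernel[of 1 4] by (simp add: G6_V_def G6_kernel_vector_def)
  then have "w i j = 0" if "i \<in> G6_V" "j \<in> G6_V" for i j
    using kernel[OF that] by simp
  then show False using differ by (auto simp: w_def)
qed

end
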